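(* Let $\gamma\in\mathcal{C}\cap C^{1,1}(\mathbb{S}_1,\mathbb{R}^d)$ with $\Delta[\gamma]>0$, let $L=1$, and let $n$ be so large that $2L\Delta[\gamma]^{-1}n^{-1}\le\pi/6$. If $x=\gamma(s)$, $y=\gamma(t)$, $z=\gamma(u)$ with $s<t<u$, $|t-s|\le 2L/n$ and $|u-t|\le 2L/n$, then $$\kappa_d(x,y,z)\le\big(1+16L^2\Delta[\gamma]^{-2}n^{-2}\big)\Delta[\gamma]^{-1}.$$
   Context: $\mathbb{S}_1=\mathbb{R}/\mathbb{Z}$. $\mathcal{C}$ is the set of $\gamma\in W^{1,\infty}(\mathbb{S}_1,\mathbb{R}^d)$ with $|\gamma'|=1$ a.e.; $C^{1,1}$ means $\gamma'$ Lipschitz. For pairwise distinct $x,y,z$, $r(x,y,z)$ is the radius of the circle through $x,y,z$ ($=\infty$ if collinear), and $\Delta[\gamma]=\inf\{r(x,y,z): x,y,z\in\gamma(\mathbb{S}_1)\text{ pairwise distinct}\}$. For three points $x,y,z$ with $\phi=\measuredangle(y-x,z-y)$, $\kappa_d(x,y,z)=\frac{2\tan(\phi/2)}{(|x-y|+|z-y|)/2}$. *)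

theory Defs
  imports "HOL-Analysis.Analysis"
begin

definition vec_angle :: "'a::real_inner \<Rightarrow> 'a \<Rightarrow> real" where
  "vec_angle u v = arccos ((u \<bullet> v) / (norm u * norm v))"

text \<open>For pairwise distinct points, r = |x - z| / (2 sin theta), theta the angle at y;
  the points are collinear iff sin theta = 0.\<close>
definition circumradius :: "'a::real_inner \<Rightarrow> 'a \<Rightarrow> 'a \<Rightarrow> ereal" where
  "circumradius x y z =
     (let th = vec_angle (x - y) (z - y) in
      if sin th = 0 then \<infinity> else ereal (norm (x - z) / (2 * sin th)))"

text \<open>Thickness Delta[gamma] of a closed curve parametrised on R with period 1.\<close>
definition thickness :: "(real \<Rightarrow> 'a::real_inner) \<Rightarrow> ereal" where
  "thickness \<gamma> = (INF p \<in> {(x, y, z). x \<in> \<gamma> ` {0..1} \<and> y \<in> \<gamma> ` {0..1} \<and> z \<in> \<gamma> ` {0..1}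
                         \<and> x \<noteq> y \<and> y \<noteq> z \<and> x \<noteq> z}.
                     (case p of (x, y, z) \<Rightarrow> circumradius x y z))"

definition kappa_d :: "'a::real_inner \<Rightarrow> 'a \<Rightarrow> 'a \<Rightarrow> real" where
  "kappa_d x y z = 2 * tan (vec_angle (y - x) (z - y) / 2) / ((norm (x - y) + norm (z - y)) / 2)"

end

theory Submission
  imports Defs "HOL-Library.Periodic_Fun"
begin

text \<open>Positive thickness \<Delta> means every circle through three points of the curve has radius
  at least \<Delta>. Letting one of the three points slide into another, the tangent at a point makes
  an angle \<theta> with every chord of length \<ell> from that point such that 2\<Delta> sin \<theta> \<le> \<ell>.
  Comparing the tangents at the two ends of a short arc with its chord shows that \<gamma>' is
  1/\<Delta>-Lipschitz. For s < t < u within 2/n of each other, both chords at \<gamma> t therefore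
  stay within angle arcsin (1/(\<Delta> n)) of the tangent \<gamma>' t, so the turning angle \<phi> at \<gamma> t
  satisfies cos \<phi> \<ge> 1 - 2/(\<Delta> n)^2. With the circumradius bound 2\<Delta> sin \<phi> \<le> |y - x| + |z - y|
  this gives \<kappa>_d = 4 sin \<phi> / ((1 + cos \<phi>)(|y - x| + |z - y|)) \<le> 2 / (\<Delta> (1 + cos \<phi>)),
  which is at most (1 + 16/(\<Delta> n)^2)/\<Delta>.\<close>

lemma abs_inner_div_norms_le_1: "\<bar>u \<bullet> v / (norm u * norm v)\<bar> \<le> 1"
  for u v :: "'a::real_inner"
proof (cases "u = 0 \<or> v = 0")
  case False
  then show ?thesis using Cauchy_Schwarz_ineq2[of u v] by (simp add: abs_div divide_le_eq_1)
qed auto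

lemma cos_vec_angle: "cos (vec_angle u v) = u \<bullet> v / (norm u * norm v)"
  unfolding vec_angle_def using abs_inner_div_norms_le_1 by (rule cos_arccos_abs)

lemma sin_vec_angle: "sin (vec_angle u v) = sqrt (1 - (u \<bullet> v / (norm u * norm v))\<^sup>2)"
  unfolding vec_angle_def using abs_inner_div_norms_le_1 by (rule sin_arccos_abs)

lemma sin_vec_angle_nonneg: "sin (vec_angle u v) \<ge> 0"
  using abs_inner_div_norms_le_1[of u v] by (simp add: sin_vec_angle abs_square_le_1)

lemma vec_angle_commute: "vec_angle u v = vec_angle v u"
  by (simp add: vec_angle_def inner_commute mult.commute)

lemma sin_vec_angle_uminus_left [simp]: "sin (vec_angle (- u) v) = sin (vec_angle u v)"
  by (simp add: sin_vec_angle)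

lemma sin_vec_angle_uminus_right [simp]: "sin (vec_angle u (- v)) = sin (vec_angle u v)"
  by (simp add: sin_vec_angle)

lemma vec_angle_scaleR_left: "c > 0 \<Longrightarrow> vec_angle (c *\<^sub>R u) v = vec_angle u v"
  by (simp add: vec_angle_def)

lemma tendsto_sin_vec_angle:
  assumes "(f \<longlongrightarrow> u) F" "(g \<longlongrightarrow> v) F" "u \<noteq> 0" "v \<noteq> 0"
  shows "((\<lambda>x. sin (vec_angle (f x) (g x))) \<longlongrightarrow> sin (vec_angle u v)) F"
  unfolding sin_vec_angle using assms by (intro tendsto_intros) auto

lemma inner_unit_vectors_ge:
  fixes a b w :: "'a::real_inner"
  assumes "norm w = 1" "norm a = 1" "norm b = 1"
  shows "a \<bullet> b \<ge> (w \<bullet> a) * (w \<bullet> b) - sqrt (1 - (w \<bullet> a)\<^sup>2) * sqrt (1 - (w \<bullet> b)\<^sup>2)"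
proof -
  define p where "p = a - (w \<bullet> a) *\<^sub>R w"
  define q where "q = b - (w \<bullet> b) *\<^sub>R w"
  have ww: "w \<bullet> w = 1" and aa: "a \<bullet> a = 1" and bb: "b \<bullet> b = 1"
    using assms by (simp_all add: dot_square_norm)
  have "a \<bullet> b = (w \<bullet> a) * (w \<bullet> b) + p \<bullet> q"
    unfolding p_def q_def using ww by (simp add: algebra_simps inner_commute)
  moreover have "norm p = sqrt (1 - (w \<bullet> a)\<^sup>2)" "norm q = sqrt (1 - (w \<bullet> b)\<^sup>2)"
    unfolding norm_eq_sqrt_inner p_def q_def using ww aa bb
    by (simp_all add: algebra_simps inner_commute power2_eq_square)
  moreover have "p \<bullet> q \<ge> - (norm p * norm q)"
    using Cauchy_Schwarz_ineq2[of p q] by linarith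
  ultimately show ?thesis by simp
qed

text \<open>The spherical triangle inequality: the angle between u and v is at most the sum of
  their angles to w.\<close>

lemma cos_vec_angle_ge:
  fixes u v w :: "'a::real_inner"
  assumes "u \<noteq> 0" "v \<noteq> 0" "w \<noteq> 0"
  shows "cos (vec_angle u v) \<ge>
    cos (vec_angle w u) * cos (vec_angle w v) - sin (vec_angle w u) * sin (vec_angle w v)"
proof -
  have cos_sgn: "cos (vec_angle x y) = sgn x \<bullet> sgn y" for x y :: 'a
    by (simp add: cos_vec_angle sgn_div_norm divide_inverse mult_ac)
  have sin_sgn: "sin (vec_angle x y) = sqrt (1 - (sgn x \<bullet> sgn y)\<^sup>2)" for x y :: 'a
    by (simp add: sin_vec_angle sgn_div_norm divide_inverse mult_ac)
  show ?thesis
    unfolding cos_sgn sin_sgn by (rule inner_unit_vectors_ge) (simp_all add: norm_sgn assms)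
qed

lemma cos_vec_angle_ge_of_sin_le:
  fixes u v w :: "'a::real_inner"
  assumes "w \<bullet> u > 0" "w \<bullet> v > 0"
    and "sin (vec_angle w u) \<le> \<sigma>" "sin (vec_angle w v) \<le> \<sigma>"
  shows "cos (vec_angle u v) \<ge> 1 - 2 * \<sigma>\<^sup>2"
proof -
  define c1 where "c1 = cos (vec_angle w u)"
  define s1 where "s1 = sin (vec_angle w u)"
  define c2 where "c2 = cos (vec_angle w v)"
  define s2 where "s2 = sin (vec_angle w v)"
  have nz: "u \<noteq> 0" "v \<noteq> 0" "w \<noteq> 0" using assms(1,2) by auto
  have c_pos: "c1 > 0" "c2 > 0"
    using assms(1,2) nz by (simp_all add: c1_def c2_def cos_vec_angle)
  have s_nonneg: "s1 \<ge> 0" "s2 \<ge> 0" by (simp_all add: s1_def s2_def sin_vec_angle_nonneg)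
  have "s1 * s2 \<le> \<sigma>\<^sup>2"
    using assms(3,4) s_nonneg unfolding s1_def s2_def power2_eq_square by (intro mult_mono) auto
  moreover have "c1 * c2 \<ge> 1 - \<sigma>\<^sup>2"
  proof (cases "\<sigma>\<^sup>2 \<le> 1")
    case True
    have "c1\<^sup>2 \<ge> 1 - \<sigma>\<^sup>2" "c2\<^sup>2 \<ge> 1 - \<sigma>\<^sup>2"
      using assms(3,4) s_nonneg sin_cos_squared_add[of "vec_angle w u"] sin_cos_squared_add[of "vec_angle w v"]
        power_mono[of s1 \<sigma> 2] power_mono[of s2 \<sigma> 2]
      unfolding c1_def c2_def s1_def s2_def by linarith+
    then have "(1 - \<sigma>\<^sup>2)\<^sup>2 \<le> (c1 * c2)\<^sup>2"
      using True unfolding power_mult_distrib power2_eq_square[of "1 - \<sigma>\<^sup>2"]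
      by (intro mult_mono) auto
    moreover have "0 \<le> c1 * c2" using c_pos by simp
    ultimately show ?thesis by (rule power2_le_imp_le)
  next
    case False
    moreover have "0 < c1 * c2" using c_pos by simp
    ultimately show ?thesis by simp
  qed
  moreover have "cos (vec_angle u v) \<ge> c1 * c2 - s1 * s2"
    unfolding c1_def c2_def s1_def s2_def using nz by (rule cos_vec_angle_ge)
  ultimately show ?thesis by linarith
qed

lemma kappa_d_le_of_angle_bounds:
  fixes x y z :: "'a::real_inner"
  assumes "R > 0" "0 \<le> \<sigma>" "\<sigma> \<le> 1/2" "x \<noteq> y"
    and cos_ge: "cos (vec_angle (y - x) (z - y)) \<ge> 1 - 2 * \<sigma>\<^sup>2"
    and sin_le: "2 * R * sin (vec_angle (y - x) (z - y)) \<le> norm (y - x) + norm (z - y)"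
  shows "kappa_d x y z \<le> (1 + 16 * \<sigma>\<^sup>2) / R"
proof -
  define \<phi> where "\<phi> = vec_angle (y - x) (z - y)"
  define L where "L = norm (y - x) + norm (z - y)"
  have L_pos: "L > 0" using assms(4) by (simp add: L_def add_pos_nonneg)
  have \<sigma>_sq: "\<sigma>\<^sup>2 \<le> 1/4" using assms(2,3) power_mono[of \<sigma> "1/2" 2] by (simp add: power_divide)
  have cos_pos: "1 + cos \<phi> > 0" using cos_ge \<sigma>_sq by (simp add: \<phi>_def)
  have "kappa_d x y z = 2 * (sin \<phi> / (cos \<phi> + 1)) / (L / 2)"
    using tan_half[of "\<phi> / 2"] by (simp add: kappa_d_def \<phi>_def L_def norm_minus_commute)
  also have "\<dots> = (4 * sin \<phi> / L) / (1 + cos \<phi>)"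
    by (simp add: field_simps)
  also have "\<dots> \<le> (2 / R) / (1 + cos \<phi>)"
    using sin_le L_pos assms(1) cos_pos
    by (intro divide_right_mono) (simp_all add: \<phi>_def L_def field_simps)
  also have "\<dots> = (2 / (1 + cos \<phi>)) / R" by simp
  also have "\<dots> \<le> (1 + 16 * \<sigma>\<^sup>2) / R"
  proof (intro divide_right_mono)
    have "(1 + 16 * \<sigma>\<^sup>2) * (2 * (1 - \<sigma>\<^sup>2)) = 2 + 2 * \<sigma>\<^sup>2 * (15 - 16 * \<sigma>\<^sup>2)"
      by (simp add: algebra_simps power2_eq_square)
    moreover have "2 * \<sigma>\<^sup>2 * (15 - 16 * \<sigma>\<^sup>2) \<ge> 0" using \<sigma>_sq by simp
    ultimately have "2 \<le> (1 + 16 * \<sigma>\<^sup>2) * (2 * (1 - \<sigma>\<^sup>2))" by linarith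
    also have "\<dots> \<le> (1 + 16 * \<sigma>\<^sup>2) * (1 + cos \<phi>)"
      using cos_ge by (intro mult_left_mono) (simp_all add: \<phi>_def)
    finally show "2 / (1 + cos \<phi>) \<le> 1 + 16 * \<sigma>\<^sup>2"
      using cos_pos by (simp add: pos_divide_le_eq)
  qed (use assms(1) in simp)
  finally show ?thesis .
qed

lemma sin_vec_angle_le_circumradius:
  assumes "R > 0" "ereal R \<le> circumradius x y z"
  shows "2 * R * sin (vec_angle (x - y) (z - y)) \<le> norm (x - z)"
proof (cases "sin (vec_angle (x - y) (z - y)) = 0")
  case False
  then have "sin (vec_angle (x - y) (z - y)) > 0"
    using sin_vec_angle_nonneg[of "x - y" "z - y"] by linarith
  moreover have "R \<le> norm (x - z) / (2 * sin (vec_angle (x - y) (z - y)))"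
    using assms(2) False by (simp add: circumradius_def Let_def)
  ultimately show ?thesis by (simp add: field_simps)
qed simp

lemma continuous_AE_lborel_eq_const:
  fixes f :: "'a::euclidean_space \<Rightarrow> 'b::t1_space"
  assumes "continuous_on UNIV f" "AE x in lborel. f x = c"
  shows "f x = c"
proof (rule ccontr)
  assume "f x \<noteq> c"
  obtain N where N: "{x \<in> space lborel. f x \<noteq> c} \<subseteq> N" "emeasure lborel N = 0" "N \<in> sets lborel"
    using assms(2) by (rule AE_E)
  then have "negligible N"
    by (simp add: negligible_iff_null_sets null_setsI null_sets_completionI)
  then have "negligible (f -` (- {c}))"
    using N(1) by (auto intro: negligible_subset)
  moreover have "open (f -` (- {c}))"
    using assms(1) by (intro open_vimage) auto
  ultimately show False
    using open_not_negligible \<open>f x \<noteq> c\<close> by blast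
qed

lemma tendsto_difference_quotient:
  assumes "(f has_vector_derivative f') (at a)"
  shows "((\<lambda>h. (f (a + h) - f a) /\<^sub>R h) \<longlongrightarrow> f') (at 0)"
proof -
  have "((\<lambda>h. norm (f (a + h) - f a - h *\<^sub>R f') / norm h) \<longlongrightarrow> 0) (at 0)"
    using assms by (simp add: has_vector_derivative_def has_derivative_at)
  moreover have "norm (f (a + h) - f a - h *\<^sub>R f') / norm h = norm ((f (a + h) - f a) /\<^sub>R h - f')"
    if "h \<noteq> 0" for h
  proof -
    have "(f (a + h) - f a) /\<^sub>R h - f' = inverse h *\<^sub>R (f (a + h) - f a - h *\<^sub>R f')"
      using that by (simp add: scaleR_diff_right)
    then show ?thesis by (simp add: divide_inverse abs_inverse)
  qed
  ultimately have "((\<lambda>h. norm ((f (a + h) - f a) /\<^sub>R h - f')) \<longlongrightarrow> 0) (at 0)"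
    by (auto intro: Lim_transform_eventually simp: eventually_at_filter)
  then show ?thesis by (simp add: tendsto_norm_zero_iff LIM_zero_cancel)
qed

locale arclength_closed_curve =
  fixes \<gamma> \<gamma>' :: "real \<Rightarrow> 'a::euclidean_space"
  assumes periodic: "\<And>r. \<gamma> (r + 1) = \<gamma> r"
    and deriv: "\<And>r. (\<gamma> has_vector_derivative \<gamma>' r) (at r)"
    and arclength: "AE r in lborel. norm (\<gamma>' r) = 1"
    and C11: "\<exists>C. C-lipschitz_on UNIV \<gamma>'"
begin

text \<open>The C^{1,1} hypothesis is used only through the continuity of \<gamma>'; the Lipschitz
  constant that matters, 1/\<Delta>, is derived from the thickness in lipschitz_derivative.\<close>

lemma continuous_on_derivative: "continuous_on UNIV \<gamma>'"
  using C11 lipschitz_on_continuous_on by blast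

lemma norm_derivative [simp]: "norm (\<gamma>' r) = 1"
  using continuous_on_derivative arclength
  by (intro continuous_AE_lborel_eq_const[where f = "\<lambda>r. norm (\<gamma>' r)"] continuous_intros)

lemma mvt_inner:
  assumes "a < b"
  obtains \<xi> where "\<xi> \<in> {a<..<b}" "(\<gamma> b - \<gamma> a) \<bullet> w = (b - a) * (\<gamma>' \<xi> \<bullet> w)"
proof -
  have "((\<lambda>r. \<gamma> r \<bullet> w) has_derivative (\<lambda>h. (h *\<^sub>R \<gamma>' r) \<bullet> w)) (at r)" for r
    using deriv[of r] unfolding has_vector_derivative_def by (rule has_derivative_inner_left)
  then have "((\<lambda>r. \<gamma> r \<bullet> w) has_derivative (\<lambda>h. h * (\<gamma>' r \<bullet> w))) (at r within {a..b})" for r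
    by (auto intro: has_derivative_at_withinI)
  from mvt_simple[OF assms this] that show ?thesis
    by (auto simp: inner_diff_left)
qed

lemma norm_chord_le: "norm (\<gamma> b - \<gamma> a) \<le> \<bar>b - a\<bar>"
proof -
  have "norm (\<gamma> b - \<gamma> a) \<le> 1 * norm (b - a)"
  proof (rule differentiable_bound[of UNIV])
    show "(\<gamma> has_derivative (\<lambda>h. h *\<^sub>R \<gamma>' r)) (at r within UNIV)" for r
      using deriv by (simp add: has_vector_derivative_def)
    show "onorm (\<lambda>h. h *\<^sub>R \<gamma>' r) \<le> 1" for r
      by (simp add: onorm_scaleR_left onorm_id)
  qed auto
  then show ?thesis by simp
qed

lemma curve_point_in_image: "\<gamma> r \<in> \<gamma> ` {0..1}"
proof -
  interpret periodic_fun_simple' \<gamma> by unfold_locales (rule periodic)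
  have "\<gamma> r = \<gamma> (frac r)"
    using minus_of_int[of r "\<lfloor>r\<rfloor>"] by (simp add: frac_def)
  moreover have "frac r \<in> {0..1}"
    using frac_lt_1[of r] frac_ge_0[of r] by auto
  ultimately show ?thesis by blast
qed

lemma thickness_le_circumradius:
  assumes "\<gamma> x \<noteq> \<gamma> y" "\<gamma> y \<noteq> \<gamma> z" "\<gamma> x \<noteq> \<gamma> z"
  shows "thickness \<gamma> \<le> circumradius (\<gamma> x) (\<gamma> y) (\<gamma> z)"
  unfolding thickness_def using curve_point_in_image assms
  by (auto intro!: INF_lower2[of "(\<gamma> x, \<gamma> y, \<gamma> z)"])

lemma sin_vec_angle_le_thickness:
  assumes "R > 0" "ereal R \<le> thickness \<gamma>"
    and "\<gamma> x \<noteq> \<gamma> y" "\<gamma> y \<noteq> \<gamma> z" "\<gamma> x \<noteq> \<gamma> z"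
  shows "2 * R * sin (vec_angle (\<gamma> x - \<gamma> y) (\<gamma> z - \<gamma> y)) \<le> norm (\<gamma> x - \<gamma> z)"
  using assms thickness_le_circumradius by (blast intro: sin_vec_angle_le_circumradius order.trans)

lemma inner_chord_pos:
  assumes "a < b" "norm w = 1" "\<And>r. a \<le> r \<Longrightarrow> r \<le> b \<Longrightarrow> norm (\<gamma>' r - w) \<le> 1"
  shows "(\<gamma> b - \<gamma> a) \<bullet> w > 0"
proof -
  obtain \<xi> where \<xi>: "\<xi> \<in> {a<..<b}" "(\<gamma> b - \<gamma> a) \<bullet> w = (b - a) * (\<gamma>' \<xi> \<bullet> w)"
    using mvt_inner[OF assms(1)] .
  have "(norm (\<gamma>' \<xi> - w))\<^sup>2 \<le> 1"
    using \<xi>(1) assms(3)[of \<xi>] by (simp add: power_le_one)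
  then have "\<gamma>' \<xi> \<bullet> w \<ge> 1/2"
    using assms(2) dot_norm_neg[of "\<gamma>' \<xi>" w] by simp
  then show ?thesis using \<xi>(2) assms(1) by simp
qed

text \<open>The limit of the three-point bound as the middle point slides into \<gamma> a.\<close>

lemma tangent_chord_sin_le:
  assumes R: "R > 0" "ereal R \<le> thickness \<gamma>" and "\<gamma> a \<noteq> \<gamma> b"
  shows "2 * R * sin (vec_angle (\<gamma>' a) (\<gamma> b - \<gamma> a)) \<le> norm (\<gamma> b - \<gamma> a)"
proof -
  define D where "D h = (\<gamma> (a + h) - \<gamma> a) /\<^sub>R h" for h
  have lim_D: "(D \<longlongrightarrow> \<gamma>' a) (at_right 0)"
    using tendsto_difference_quotient[OF deriv, of a] unfolding D_def
    by (rule tendsto_within_subset) (rule subset_UNIV)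
  have "isCont \<gamma> a"
    using deriv by (rule has_vector_derivative_continuous)
  then have lim_\<gamma>: "((\<lambda>h. \<gamma> (a + h)) \<longlongrightarrow> \<gamma> a) (at_right 0)"
    unfolding isCont_def by (intro tendsto_within_subset[OF LIM_offset_zero subset_UNIV])
  have nz: "\<gamma>' a \<noteq> 0" "\<gamma> b - \<gamma> a \<noteq> 0"
    using assms(3) by (metis norm_derivative norm_zero zero_neq_one, simp)
  have lim_sin: "((\<lambda>h. sin (vec_angle (D h) (\<gamma> b - \<gamma> (a + h))))
      \<longlongrightarrow> sin (vec_angle (\<gamma>' a) (\<gamma> b - \<gamma> a))) (at_right 0)"
    by (rule tendsto_sin_vec_angle[OF lim_D tendsto_diff[OF tendsto_const lim_\<gamma>] nz])
  have "\<forall>\<^sub>F h in at_right 0. h > (0::real)" by (rule eventually_at_right_less)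
  moreover have "\<forall>\<^sub>F h in at_right 0. D h \<noteq> 0"
    using lim_D nz(1) by (rule tendsto_imp_eventually_ne)
  moreover have "\<forall>\<^sub>F h in at_right 0. \<gamma> (a + h) \<noteq> \<gamma> b"
    using lim_\<gamma> assms(3) by (rule tendsto_imp_eventually_ne)
  ultimately have "\<forall>\<^sub>F h in at_right 0.
      2 * R * sin (vec_angle (D h) (\<gamma> b - \<gamma> (a + h))) \<le> norm (\<gamma> b - \<gamma> a)"
  proof eventually_elim
    case (elim h)
    then have "\<gamma> a - \<gamma> (a + h) = - (h *\<^sub>R D h)" "\<gamma> a \<noteq> \<gamma> (a + h)"
      by (auto simp: D_def)
    moreover have "sin (vec_angle (- (h *\<^sub>R D h)) v) = sin (vec_angle (D h) v)" for v
      using elim(1) by (simp add: vec_angle_scaleR_left)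
    ultimately show ?case
      using sin_vec_angle_le_thickness[OF R, of a "a + h" b] elim(3) assms(3)
      by (simp add: norm_minus_commute)
  qed
  then show ?thesis
    by (intro tendsto_le[OF _ tendsto_const tendsto_mult_left[OF lim_sin]]) simp_all
qed

lemma norm_derivative_diff_le:
  assumes R: "R > 0" "ereal R \<le> thickness \<gamma>" and "a < b"
    and near: "\<And>r. a \<le> r \<Longrightarrow> r \<le> b \<Longrightarrow> norm (\<gamma>' r - \<gamma>' a) \<le> 1 \<and> norm (\<gamma>' r - \<gamma>' b) \<le> 1"
  shows "norm (\<gamma>' a - \<gamma>' b) \<le> (b - a) / R"
proof -
  define d where "d = \<gamma> b - \<gamma> a"
  define \<sigma> where "\<sigma> = (b - a) / (2 * R)"
  have d_a: "d \<bullet> \<gamma>' a > 0" and d_b: "d \<bullet> \<gamma>' b > 0"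
    unfolding d_def using assms(3) near by (auto intro!: inner_chord_pos)
  then have ne: "\<gamma> a \<noteq> \<gamma> b" by (auto simp: d_def)
  have d_le: "norm d \<le> b - a" using norm_chord_le[of b a] assms(3) by (simp add: d_def)
  have "2 * R * sin (vec_angle (\<gamma>' a) d) \<le> b - a"
    using tangent_chord_sin_le[OF R ne] d_le by (simp add: d_def)
  then have sin_a: "sin (vec_angle d (\<gamma>' a)) \<le> \<sigma>"
    using R(1) unfolding \<sigma>_def vec_angle_commute[of d] by (simp add: pos_le_divide_eq mult_ac)
  have "2 * R * sin (vec_angle (\<gamma>' b) (- d)) \<le> b - a"
    using tangent_chord_sin_le[OF R ne[symmetric]] d_le by (simp add: d_def norm_minus_commute)
  then have sin_b: "sin (vec_angle d (\<gamma>' b)) \<le> \<sigma>"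
    using R(1) unfolding \<sigma>_def vec_angle_commute[of d] by (simp add: pos_le_divide_eq mult_ac)
  have "\<gamma>' a \<bullet> \<gamma>' b \<ge> 1 - 2 * \<sigma>\<^sup>2"
    using cos_vec_angle_ge_of_sin_le[OF d_a d_b sin_a sin_b] by (simp add: cos_vec_angle)
  then have "(norm (\<gamma>' a - \<gamma>' b))\<^sup>2 \<le> (2 * \<sigma>)\<^sup>2"
    using dot_norm_neg[of "\<gamma>' a" "\<gamma>' b"] by (simp add: power_mult_distrib)
  moreover have "0 \<le> 2 * \<sigma>" using R(1) assms(3) by (simp add: \<sigma>_def)
  ultimately have "norm (\<gamma>' a - \<gamma>' b) \<le> 2 * \<sigma>" by (rule power2_le_imp_le)
  moreover have "2 * \<sigma> = (b - a) / R" using R(1) unfolding \<sigma>_def by (simp add: field_simps)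
  ultimately show ?thesis by simp
qed

lemma lipschitz_derivative:
  assumes R: "R > 0" "ereal R \<le> thickness \<gamma>"
  shows "(1 / R)-lipschitz_on UNIV \<gamma>'"
proof -
  have le: "dist (\<gamma>' b) (\<gamma>' a) \<le> 1 / R * (b - a)" if "a \<le> b" for a b
  proof (rule locally_lipschitz_imp_lipschitz_aux[OF that])
    show "continuous_on {a..b} \<gamma>'"
      using continuous_on_derivative by (rule continuous_on_subset) simp
    fix x assume x: "x \<in> {a..<b}"
    obtain \<delta> where \<delta>: "\<delta> > 0" "\<And>r. dist r x < \<delta> \<Longrightarrow> dist (\<gamma>' r) (\<gamma>' x) < 1/2"
      using continuous_on_derivative unfolding continuous_on_iff
      by (metis UNIV_I half_gt_zero_iff zero_less_one)
    define y where "y = min b (x + \<delta> / 2)"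
    have "x < y" "y \<le> b" using x \<delta>(1) by (auto simp: y_def)
    have near_x: "dist (\<gamma>' r) (\<gamma>' x) < 1/2" if "x \<le> r" "r \<le> y" for r
      using that \<delta> by (intro \<delta>(2)) (auto simp: dist_real_def y_def)
    have "norm (\<gamma>' x - \<gamma>' y) \<le> (y - x) / R"
    proof (rule norm_derivative_diff_le[OF R \<open>x < y\<close>])
      fix r assume "x \<le> r" "r \<le> y"
      then show "norm (\<gamma>' r - \<gamma>' x) \<le> 1 \<and> norm (\<gamma>' r - \<gamma>' y) \<le> 1"
        using near_x[of r] near_x[of y] \<open>x < y\<close> norm_triangle_ineq4[of "\<gamma>' r - \<gamma>' x" "\<gamma>' y - \<gamma>' x"]
        by (simp add: dist_norm)
    qed
    then show "\<exists>y\<in>{x<..b}. dist (\<gamma>' y) (\<gamma>' x) \<le> 1 / R * (y - x)"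
      using \<open>x < y\<close> \<open>y \<le> b\<close> by (auto simp: dist_norm norm_minus_commute)
  qed
  show ?thesis
  proof (intro lipschitz_onI)
    fix x y :: real
    show "dist (\<gamma>' x) (\<gamma>' y) \<le> 1 / R * dist x y"
      using le[of x y] le[of y x] by (cases "x \<le> y") (simp_all add: dist_real_def dist_commute)
  qed (use R(1) in simp)
qed

text \<open>Infinite thickness would make \<gamma>' Lipschitz with every constant, hence constant,
  and a curve with constant unit tangent cannot close up.\<close>

lemma thickness_finite: "thickness \<gamma> \<noteq> \<infinity>"
proof
  assume inf: "thickness \<gamma> = \<infinity>"
  have const: "\<gamma>' r = \<gamma>' 0" for r
  proof -
    have "dist (\<gamma>' r) (\<gamma>' 0) \<le> e" if "e > 0" for e
    proof -
      define R where "R = (\<bar>r\<bar> + 1) / e"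
      have "R > 0" using that by (simp add: R_def add_pos_nonneg)
      then have "(1 / R)-lipschitz_on UNIV \<gamma>'"
        using inf by (intro lipschitz_derivative) simp_all
      then have "dist (\<gamma>' r) (\<gamma>' 0) \<le> 1 / R * dist r 0"
        by (rule lipschitz_onD) simp_all
      also have "\<dots> = e * (\<bar>r\<bar> / (\<bar>r\<bar> + 1))"
        using that by (simp add: R_def dist_real_def field_simps)
      also have "\<dots> \<le> e" using that by (intro mult_left_le) auto
      finally show ?thesis .
    qed
    then show ?thesis
      by (metis dist_le_zero_iff field_le_epsilon add_0)
  qed
  obtain \<xi> where "(\<gamma> 1 - \<gamma> 0) \<bullet> \<gamma>' 0 = (1 - 0) * (\<gamma>' \<xi> \<bullet> \<gamma>' 0)"
    using mvt_inner[of 0 1 "\<gamma>' 0"] by auto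
  moreover have "\<gamma> 1 = \<gamma> 0" using periodic[of 0] by simp
  ultimately show False
    using const[of \<xi>] norm_derivative[of 0] by (simp add: dot_square_norm)
qed

lemma cos_turning_angle_ge:
  assumes R: "R > 0" "ereal R \<le> thickness \<gamma>"
    and "s < t" "t < u" "t - s \<le> h" "u - t \<le> h" "h \<le> R"
  shows "cos (vec_angle (\<gamma> t - \<gamma> s) (\<gamma> u - \<gamma> t)) \<ge> 1 - 2 * (h / (2 * R))\<^sup>2"
proof -
  define p where "p = \<gamma> t - \<gamma> s"
  define q where "q = \<gamma> u - \<gamma> t"
  have near: "norm (\<gamma>' r - \<gamma>' t) \<le> 1" if "s \<le> r" "r \<le> u" for r
  proof -
    have "norm (\<gamma>' r - \<gamma>' t) \<le> 1 / R * \<bar>r - t\<bar>"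
      using lipschitz_onD[OF lipschitz_derivative[OF R]] by (simp add: dist_norm dist_real_def)
    also have "\<dots> \<le> 1 / R * h" using that assms by (intro mult_left_mono) auto
    also have "\<dots> \<le> 1" using assms by simp
    finally show ?thesis .
  qed
  have "(\<gamma> t - \<gamma> s) \<bullet> \<gamma>' t > 0" "(\<gamma> u - \<gamma> t) \<bullet> \<gamma>' t > 0"
    using assms(3,4) near by (auto intro!: inner_chord_pos)
  then have p_pos: "\<gamma>' t \<bullet> p > 0" and q_pos: "\<gamma>' t \<bullet> q > 0"
    by (simp_all add: p_def q_def inner_commute)
  then have "\<gamma> s \<noteq> \<gamma> t" "\<gamma> t \<noteq> \<gamma> u" by (auto simp: p_def q_def)
  have "\<gamma> s - \<gamma> t = - p" by (simp add: p_def)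
  then have "2 * R * sin (vec_angle (\<gamma>' t) p) \<le> norm p"
    using tangent_chord_sin_le[OF R \<open>\<gamma> s \<noteq> \<gamma> t\<close>[symmetric]] by simp
  also have "norm p \<le> h" using norm_chord_le[of t s] assms by (simp add: p_def)
  finally have sin_p: "sin (vec_angle (\<gamma>' t) p) \<le> h / (2 * R)"
    using R(1) by (simp add: pos_le_divide_eq mult_ac)
  have "2 * R * sin (vec_angle (\<gamma>' t) q) \<le> norm q"
    using tangent_chord_sin_le[OF R \<open>\<gamma> t \<noteq> \<gamma> u\<close>] by (simp add: q_def)
  also have "norm q \<le> h" using norm_chord_le[of u t] assms by (simp add: q_def)
  finally have sin_q: "sin (vec_angle (\<gamma>' t) q) \<le> h / (2 * R)"
    using R(1) by (simp add: pos_le_divide_eq mult_ac)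
  show ?thesis
    using cos_vec_angle_ge_of_sin_le[OF p_pos q_pos sin_p sin_q] by (simp add: p_def q_def)
qed

lemma kappa_d_le_thickness:
  assumes R: "R > 0" "ereal R \<le> thickness \<gamma>"
    and "s < t" "t < u" "t - s \<le> h" "u - t \<le> h" "h \<le> R"
  shows "kappa_d (\<gamma> s) (\<gamma> t) (\<gamma> u) \<le> (1 + 4 * h\<^sup>2 / R\<^sup>2) / R"
proof -
  define \<sigma> where "\<sigma> = h / (2 * R)"
  define p where "p = \<gamma> t - \<gamma> s"
  define q where "q = \<gamma> u - \<gamma> t"
  have \<sigma>: "0 \<le> \<sigma>" "\<sigma> \<le> 1/2" using assms by (simp_all add: \<sigma>_def)
  have cos_ge: "cos (vec_angle p q) \<ge> 1 - 2 * \<sigma>\<^sup>2"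
    unfolding p_def q_def \<sigma>_def using assms by (rule cos_turning_angle_ge)
  then have cos_pos: "cos (vec_angle p q) > 0"
    using \<sigma> power_mono[of \<sigma> "1/2" 2] by (simp add: power_divide)
  then have "p \<noteq> 0" "q \<noteq> 0" by (auto simp: cos_vec_angle)
  moreover have "q \<noteq> - p"
  proof
    assume "q = - p"
    then have "cos (vec_angle p q) = -1"
      using \<open>p \<noteq> 0\<close> by (simp add: cos_vec_angle dot_square_norm power2_eq_square)
    with cos_pos show False by simp
  qed
  ultimately have ne: "\<gamma> s \<noteq> \<gamma> t" "\<gamma> t \<noteq> \<gamma> u" "\<gamma> s \<noteq> \<gamma> u"
    by (auto simp: p_def q_def)
  have "\<gamma> s - \<gamma> t = - p" "\<gamma> s - \<gamma> u = - (p + q)"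
    by (simp_all add: p_def q_def)
  then have "2 * R * sin (vec_angle p q) \<le> norm (p + q)"
    using sin_vec_angle_le_thickness[OF R ne] by (simp add: q_def[symmetric] del: minus_add_distrib)
  also have "\<dots> \<le> norm p + norm q" by (rule norm_triangle_ineq)
  finally have "kappa_d (\<gamma> s) (\<gamma> t) (\<gamma> u) \<le> (1 + 16 * \<sigma>\<^sup>2) / R"
    using kappa_d_le_of_angle_bounds[OF R(1) \<sigma> ne(1)] cos_ge by (simp add: p_def q_def)
  also have "16 * \<sigma>\<^sup>2 = 4 * h\<^sup>2 / R\<^sup>2" by (simp add: \<sigma>_def power_divide power_mult_distrib)
  finally show ?thesis .
qed

end

theorem mainTheorem16:
  fixes \<gamma> \<gamma>' :: "real \<Rightarrow> 'a::euclidean_space"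
    and n :: nat and s t u :: real
  assumes periodic: "\<And>r. \<gamma> (r + 1) = \<gamma> r"
    and deriv: "\<And>r. (\<gamma> has_vector_derivative \<gamma>' r) (at r)"
    and arclength: "AE r in lborel. norm (\<gamma>' r) = 1"
    and C11: "\<exists>C. C-lipschitz_on UNIV \<gamma>'"
    and thick_pos: "thickness \<gamma> > 0"
    and n_pos: "n > 0"
    and n_large: "2 * 1 / (real_of_ereal (thickness \<gamma>) * real n) \<le> pi / 6"
    and order: "s < t" "t < u"
    and close1: "\<bar>t - s\<bar> \<le> 2 * 1 / real n"
    and close2: "\<bar>u - t\<bar> \<le> 2 * 1 / real n"
  shows "kappa_d (\<gamma> s) (\<gamma> t) (\<gamma> u)
         \<le> (1 + 16 * 1^2 / (real_of_ereal (thickness \<gamma>) ^ 2 * real n ^ 2))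
             / real_of_ereal (thickness \<gamma>)"
proof -
  interpret arclength_closed_curve \<gamma> \<gamma>'
    using periodic deriv arclength C11 by unfold_locales
  define \<Delta> where "\<Delta> = real_of_ereal (thickness \<gamma>)"
  have thickness_eq: "thickness \<gamma> = ereal \<Delta>" and \<Delta>_pos: "\<Delta> > 0"
    using thick_pos thickness_finite unfolding \<Delta>_def by (cases "thickness \<gamma>"; simp)+
  have "2 / (\<Delta> * real n) < 1"
    using n_large pi_less_4 by (simp add: \<Delta>_def)
  then have "2 / real n \<le> \<Delta>"
    using \<Delta>_pos n_pos by (simp add: field_simps)
  then have "kappa_d (\<gamma> s) (\<gamma> t) (\<gamma> u) \<le> (1 + 4 * (2 / real n)^2 / \<Delta>\<^sup>2) / \<Delta>"
    using order close1 close2 \<Delta>_pos thickness_eq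
    by (intro kappa_d_le_thickness) simp_all
  then show ?thesis
    by (simp add: \<Delta>_def power_divide mult.commute)
qed

end
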